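(* Let $\rho\in(0,1)$ and $k\ge1$ an integer, and let $\tilde\varepsilon=\rho\,\frac{1+\cos(\frac{2k-1}{2k}\pi)}{1-\cos(\frac{2k-1}{2k}\pi)}$. For every $\varepsilon\in[0,\tilde\varepsilon]$, $$\|p_\varepsilon\|_1=\frac{\tilde\rho_\varepsilon}{2}\Big(\frac{1}{\rho+\varepsilon}\Big)^k\Big(\big(2+\rho-\varepsilon-2\sqrt{(1+\rho)(1-\varepsilon)}\big)^k+\big(2+\rho-\varepsilon+2\sqrt{(1+\rho)(1-\varepsilon)}\big)^k\Big),$$ where $\tilde\rho_\varepsilon=\frac{2\beta_\varepsilon^k}{1+\beta_\varepsilon^{2k}}$ and $\beta_\varepsilon=\frac{1-\sqrt{1-\frac{\rho+\varepsilon}{1+\varepsilon}}}{1+\sqrt{1-\frac{\rho+\varepsilon}{1+\varepsilon}}}$.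
   Context: $\mathbb{R}_k[X]$ denotes real polynomials of degree at most $k$, and $\|p\|_1$ is the sum of absolute values of the coefficients of $p$. $p_\varepsilon$ denotes the minimizer of $\max_{x\in[-\varepsilon,\rho]}|p(x)|$ over $p\in\mathbb{R}_k[X]$ with $p(1)=1$; explicitly $p_\varepsilon(X)=T_k\big(2\frac{X+\varepsilon}{\rho+\varepsilon}-1\big)/\big|T_k\big(2\frac{1+\varepsilon}{\rho+\varepsilon}-1\big)\big|$, with $T_k$ the Chebyshev polynomial of the first kind of degree $k$. *)

theory Defs
  imports "HOL-Analysis.Analysis" "HOL-Computational_Algebra.Polynomial"
begin

fun cheb_T :: "nat \<Rightarrow> real poly" where
  "cheb_T 0 = 1"
| "cheb_T (Suc 0) = [:0, 1:]"
| "cheb_T (Suc (Suc n)) = [:0, 2:] * cheb_T (Suc n) - cheb_T n"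

definition poly_l1 :: "real poly \<Rightarrow> real" where
  "poly_l1 p = (\<Sum>i\<le>degree p. \<bar>coeff p i\<bar>)"

text \<open>The optimal polynomial p_eps on [-eps, rho] with p(1) = 1 (explicit Chebyshev form):
  p_eps(X) = T_k(2 (X+eps)/(rho+eps) - 1) / |T_k(2 (1+eps)/(rho+eps) - 1)|.\<close>
definition p_eps :: "real \<Rightarrow> nat \<Rightarrow> real \<Rightarrow> real poly" where
  "p_eps \<rho> k \<epsilon> =
     smult (1 / \<bar>poly (cheb_T k) (2 * (1 + \<epsilon>) / (\<rho> + \<epsilon>) - 1)\<bar>)
       (pcompose (cheb_T k) [: 2 * \<epsilon> / (\<rho> + \<epsilon>) - 1, 2 / (\<rho> + \<epsilon>) :])"

end

theory Submission
  imports Defs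
begin

(* p_eps is a positive multiple of T_k (a X + b) with a = 2 / (rho + eps), b = 2 eps / (rho + eps) - 1.
   Its k roots are the preimages of the Chebyshev nodes cos ((2 j - 1) pi / (2 k)), and the bound on
   eps says precisely that the preimage of the smallest node is still nonnegative. A real polynomial
   all of whose roots are nonnegative has coefficients of alternating sign, so its l1 norm is
   |p(-1)|. The two values of T_k that remain, at the images of 1 and -1, follow from
   T_k ((u + 1/u) / 2) = (u^k + u^-k) / 2. *)

lemma degree_cheb_T [simp]: "degree (cheb_T n) = n"
proof (induction n rule: cheb_T.induct)
  case (3 n)
  have "cheb_T (Suc n) \<noteq> 0"
    using "3.IH"(1) by (metis degree_0 nat.distinct(1))
  then have "degree ([:0, 2:] * cheb_T (Suc n)) = Suc (Suc n)"
    using "3.IH"(1) by (subst degree_mult_eq) auto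
  then show ?case
    using "3.IH"(2) degree_add_eq_left[of "- cheb_T n" "[:0, 2:] * cheb_T (Suc n)"] by simp
qed simp_all

lemma poly_cheb_T_eq_power_sum:
  fixes u v x :: real
  assumes "u + v = 2 * x" "u * v = 1"
  shows "poly (cheb_T n) x = (u ^ n + v ^ n) / 2"
proof (induction n rule: cheb_T.induct)
  case (3 n)
  have recurrence: "w ^ Suc (Suc n) = 2 * x * w ^ Suc n - w ^ n" if "w * w = 2 * x * w - 1" for w
  proof -
    have "w ^ Suc (Suc n) = (w * w) * w ^ n" by simp
    then show ?thesis using that by (simp add: algebra_simps)
  qed
  have "u * u = 2 * x * u - 1" "v * v = 2 * x * v - 1"
    using assms by algebra+
  note recurrence_uv = recurrence[OF this(1)] recurrence[OF this(2)]
  have "poly (cheb_T (Suc (Suc n))) x = 2 * x * poly (cheb_T (Suc n)) x - poly (cheb_T n) x"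
    by simp
  also have "\<dots> = (2 * x * (u ^ Suc n + v ^ Suc n) - (u ^ n + v ^ n)) / 2"
    unfolding "3.IH" by (simp add: field_simps)
  also have "\<dots> = (u ^ Suc (Suc n) + v ^ Suc (Suc n)) / 2"
    by (simp only: recurrence_uv) (simp add: algebra_simps)
  finally show ?case .
qed (use assms in simp_all)

lemma abs_poly_cheb_T_eq:
  fixes u v x :: real
  assumes "u + v = 2 * x" "u * v = 1"
  shows "\<bar>poly (cheb_T n) x\<bar> = (\<bar>u\<bar> ^ n + \<bar>v\<bar> ^ n) / 2"
proof -
  have "0 < u * v" using assms(2) by simp
  then consider "0 < u" "0 < v" | "u < 0" "v < 0"
    by (auto simp: zero_less_mult_iff)
  then have "\<bar>u ^ n + v ^ n\<bar> = \<bar>u\<bar> ^ n + \<bar>v\<bar> ^ n"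
  proof cases
    case 2
    have "u ^ n + v ^ n = (-1) ^ n * (\<bar>u\<bar> ^ n + \<bar>v\<bar> ^ n)"
      using 2 by (simp add: power_minus[symmetric] algebra_simps)
    then show ?thesis by (simp add: abs_mult)
  qed simp
  then show ?thesis
    by (simp add: poly_cheb_T_eq_power_sum[OF assms])
qed

lemma poly_cheb_T_cos: "poly (cheb_T n) (cos t) = cos (real n * t)"
proof (induction n rule: cheb_T.induct)
  case (3 n)
  have "cos (real (Suc (Suc n)) * t) = 2 * cos t * cos (real (Suc n) * t) - cos (real n * t)"
    using cos_times_cos[of t "real (Suc n) * t"] by (simp add: algebra_simps)
  then show ?case
    using 3 by (simp add: algebra_simps)
qed simp_all

definition cheb_node :: "nat \<Rightarrow> nat \<Rightarrow> real" where
  "cheb_node k j = cos ((2 * real j - 1) / (2 * real k) * pi)"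

lemma poly_cheb_T_cheb_node:
  assumes "0 < k"
  shows "poly (cheb_T k) (cheb_node k j) = 0"
proof -
  have "real k * ((2 * real j - 1) / (2 * real k) * pi) = real j * pi - pi / 2"
    using assms by (simp add: field_simps)
  then show ?thesis
    by (simp add: cheb_node_def poly_cheb_T_cos cos_diff)
qed

lemma cheb_node_strict_antimono:
  assumes "1 \<le> i" "i < j" "j \<le> k"
  shows "cheb_node k j < cheb_node k i"
  unfolding cheb_node_def
proof (rule cos_monotone_0_pi)
  have "0 < real k" using assms by simp
  then show "0 \<le> (2 * real i - 1) / (2 * real k) * pi"
    using assms by simp
  show "(2 * real i - 1) / (2 * real k) * pi < (2 * real j - 1) / (2 * real k) * pi"
    using assms by (simp add: divide_strict_right_mono)
  have "(2 * real j - 1) / (2 * real k) * pi \<le> 1 * pi"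
    using assms by (intro mult_right_mono) simp_all
  then show "(2 * real j - 1) / (2 * real k) * pi \<le> pi"
    by simp
qed

lemma cheb_node_last_nonpos:
  assumes "1 \<le> k"
  shows "cheb_node k k \<le> 0"
proof -
  have "pi / 2 \<le> (2 * real k - 1) / (2 * real k) * pi"
    using assms by (simp add: field_simps)
  moreover have "(2 * real k - 1) / (2 * real k) * pi \<le> pi"
    using assms by (simp add: field_simps)
  ultimately show ?thesis
    unfolding cheb_node_def using cos_monotone_0_pi_le[of "pi / 2"] by fastforce
qed

definition alternating_coeffs :: "real poly \<Rightarrow> bool" where
  "alternating_coeffs p \<longleftrightarrow> (\<exists>\<sigma>. \<bar>\<sigma>\<bar> = 1 \<and> (\<forall>i. 0 \<le> \<sigma> * (-1) ^ i * coeff p i))"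

lemma alternating_coeffs_const: "alternating_coeffs [:c:]"
  unfolding alternating_coeffs_def
  by (rule exI[of _ "if c < 0 then -1 else 1"]) (auto simp: coeff_pCons split: nat.split)

lemma alternating_coeffs_smult:
  assumes "alternating_coeffs p"
  shows "alternating_coeffs (smult c p)"
proof -
  obtain \<sigma> where \<sigma>: "\<bar>\<sigma>\<bar> = 1" "\<And>i. 0 \<le> \<sigma> * (-1) ^ i * coeff p i"
    using assms unfolding alternating_coeffs_def by blast
  define \<tau> where "\<tau> = (if c < 0 then - \<sigma> else \<sigma>)"
  have "0 \<le> \<tau> * (-1) ^ i * coeff (smult c p) i" for i
  proof -
    have "\<tau> * (-1) ^ i * coeff (smult c p) i = \<bar>c\<bar> * (\<sigma> * (-1) ^ i * coeff p i)"
      by (simp add: \<tau>_def abs_if)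
    then show ?thesis
      by (metis \<sigma>(2) abs_ge_zero mult_nonneg_nonneg)
  qed
  moreover have "\<bar>\<tau>\<bar> = 1"
    using \<sigma>(1) by (simp add: \<tau>_def)
  ultimately show ?thesis
    unfolding alternating_coeffs_def by blast
qed

lemma alternating_coeffs_mult_linear:
  assumes "0 \<le> r" "alternating_coeffs q"
  shows "alternating_coeffs ([:-r, 1:] * q)"
proof -
  obtain \<sigma> where \<sigma>: "\<bar>\<sigma>\<bar> = 1" "\<And>i. 0 \<le> \<sigma> * (-1) ^ i * coeff q i"
    using assms(2) unfolding alternating_coeffs_def by blast
  have "0 \<le> - \<sigma> * (-1) ^ i * coeff ([:-r, 1:] * q) i" for i
  proof (cases i)
    case 0
    then show ?thesis
      using \<sigma>(2)[of 0] assms(1) by (simp add: mult.left_commute[of \<sigma> r])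
  next
    case (Suc j)
    then have "- \<sigma> * (-1) ^ i * coeff ([:-r, 1:] * q) i
        = r * (\<sigma> * (-1) ^ i * coeff q i) + \<sigma> * (-1) ^ j * coeff q j"
      by (simp add: algebra_simps)
    then show ?thesis
      using \<sigma>(2)[of i] \<sigma>(2)[of j] assms(1) by simp
  qed
  then show ?thesis
    unfolding alternating_coeffs_def using \<sigma>(1) by (metis abs_minus_cancel)
qed

lemma alternating_coeffs_if_nonneg_roots:
  assumes "finite S" "card S = degree p" "\<forall>s\<in>S. 0 \<le> s \<and> poly p s = 0"
  shows "alternating_coeffs p"
  using assms
proof (induction S arbitrary: p rule: finite_induct)
  case empty
  then have "p = [:coeff p 0:]"
    by (metis degree_0_id card.empty)
  then show ?case
    by (metis alternating_coeffs_const)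
next
  case (insert r S)
  have "poly p r = 0"
    using insert.prems(2) by simp
  then obtain q where pq: "p = [:-r, 1:] * q"
    by (metis poly_eq_0_iff_dvd dvd_def)
  have "p \<noteq> 0"
    using insert.hyps insert.prems(1) by auto
  then have "q \<noteq> 0"
    using pq by auto
  then have "card S = degree q"
    using insert.hyps insert.prems(1) pq degree_mult_eq[of "[:-r, 1:]" q]
    by (simp del: mult_pCons_left)
  moreover have "0 \<le> s \<and> poly q s = 0" if "s \<in> S" for s
  proof -
    have "s \<noteq> r" "0 \<le> s" "poly p s = 0"
      using that insert.hyps insert.prems(2) by auto
    then show ?thesis
      using pq by simp
  qed
  ultimately have "alternating_coeffs q"
    using insert.IH by blast
  moreover have "0 \<le> r"
    using insert.prems(2) by simp
  ultimately show ?case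
    unfolding pq by (intro alternating_coeffs_mult_linear)
qed

lemma poly_l1_alternating:
  assumes "alternating_coeffs p"
  shows "poly_l1 p = \<bar>poly p (-1)\<bar>"
proof -
  obtain \<sigma> where \<sigma>: "\<bar>\<sigma>\<bar> = 1" "\<And>i. 0 \<le> \<sigma> * (-1) ^ i * coeff p i"
    using assms unfolding alternating_coeffs_def by blast
  have "\<bar>coeff p i\<bar> = \<sigma> * (coeff p i * (-1) ^ i)" for i
  proof -
    have "\<bar>coeff p i\<bar> = \<bar>\<sigma> * (-1) ^ i * coeff p i\<bar>"
      using \<sigma>(1) by (simp add: abs_mult)
    also have "\<dots> = \<sigma> * (-1) ^ i * coeff p i"
      using \<sigma>(2) by simp
    finally show ?thesis by (simp add: algebra_simps)
  qed
  then have "poly_l1 p = \<sigma> * poly p (-1)"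
    unfolding poly_l1_def poly_altdef by (simp add: sum_distrib_left)
  moreover have "0 \<le> poly_l1 p"
    unfolding poly_l1_def by (simp add: sum_nonneg)
  ultimately show ?thesis
    using \<sigma>(1) by (metis abs_mult abs_of_nonneg mult_1)
qed

lemma alternating_coeffs_cheb_T_pcompose:
  assumes "0 < a" "0 < k" "b \<le> cheb_node k k"
  shows "alternating_coeffs (cheb_T k \<circ>\<^sub>p [:b, a:])"
proof -
  define root where "root j = (cheb_node k j - b) / a" for j
  have "inj_on root {1..k}"
  proof (rule linorder_inj_onI')
    fix i j assume "i \<in> {1..k}" "j \<in> {1..k}" "i < j"
    then show "root i \<noteq> root j"
      using cheb_node_strict_antimono[of i j k] assms(1) by (auto simp: root_def)
  qed
  then have "card (root ` {1..k}) = degree (cheb_T k \<circ>\<^sub>p [:b, a:])"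
    using assms(1) by (simp add: card_image degree_pcompose)
  moreover have "0 \<le> s \<and> poly (cheb_T k \<circ>\<^sub>p [:b, a:]) s = 0" if s: "s \<in> root ` {1..k}" for s
  proof -
    obtain j where j: "j \<in> {1..k}" "s = root j"
      using s by blast
    have "cheb_node k k \<le> cheb_node k j"
      using cheb_node_strict_antimono[of j k k] j by (cases "j = k") auto
    then have "0 \<le> s"
      using j assms by (simp add: root_def)
    moreover have "b + s * a = cheb_node k j"
      using j assms(1) by (simp add: root_def)
    ultimately show ?thesis
      using poly_cheb_T_cheb_node[OF assms(2)] by (simp add: poly_pcompose)
  qed
  ultimately show ?thesis
    by (intro alternating_coeffs_if_nonneg_roots[of "root ` {1..k}"]) auto
qed

lemma shift_le_if_eps_bound:
  fixes \<rho> \<epsilon> c :: real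
  assumes "0 < \<rho>" "0 \<le> \<epsilon>" "c \<le> 0"
    and "\<epsilon> \<le> \<rho> * (1 + c) / (1 - c)"
  shows "2 * \<epsilon> / (\<rho> + \<epsilon>) - 1 \<le> c" and "\<epsilon> \<le> \<rho>"
proof -
  have "\<epsilon> - \<rho> \<le> c * (\<rho> + \<epsilon>)"
    using assms(3,4) by (simp add: field_simps)
  moreover have "c * (\<rho> + \<epsilon>) \<le> 0"
    using assms(1,2,3) by (simp add: mult_nonpos_nonneg)
  ultimately show "2 * \<epsilon> / (\<rho> + \<epsilon>) - 1 \<le> c" and "\<epsilon> \<le> \<rho>"
    using assms(1,2) by (simp_all add: field_simps)
qed

lemma poly_l1_p_eps:
  assumes "0 < \<rho> + \<epsilon>" "0 < k" "2 * \<epsilon> / (\<rho> + \<epsilon>) - 1 \<le> cheb_node k k"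
  shows "poly_l1 (p_eps \<rho> k \<epsilon>)
    = \<bar>poly (cheb_T k) (- (2 + \<rho> - \<epsilon>) / (\<rho> + \<epsilon>))\<bar>
      / \<bar>poly (cheb_T k) ((2 + \<epsilon> - \<rho>) / (\<rho> + \<epsilon>))\<bar>"
proof -
  have "alternating_coeffs (p_eps \<rho> k \<epsilon>)"
    unfolding p_eps_def using assms
    by (intro alternating_coeffs_smult alternating_coeffs_cheb_T_pcompose) simp_all
  moreover have "\<rho> + \<epsilon> \<noteq> 0"
    using assms(1) by simp
  then have "2 * \<epsilon> / (\<rho> + \<epsilon>) - 1 + - 1 * (2 / (\<rho> + \<epsilon>)) = - (2 + \<rho> - \<epsilon>) / (\<rho> + \<epsilon>)"
    and "2 * (1 + \<epsilon>) / (\<rho> + \<epsilon>) - 1 = (2 + \<epsilon> - \<rho>) / (\<rho> + \<epsilon>)"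
    by (simp_all add: divide_simps)
  ultimately show ?thesis
    by (simp add: poly_l1_alternating p_eps_def poly_pcompose abs_mult)
qed

lemma inverse_abs_poly_cheb_T_joukowski:
  fixes \<beta> :: real
  assumes "0 < \<beta>"
  shows "1 / \<bar>poly (cheb_T k) ((\<beta> + 1 / \<beta>) / 2)\<bar> = 2 * \<beta> ^ k / (1 + \<beta> ^ (2 * k))"
proof -
  have "\<bar>poly (cheb_T k) ((\<beta> + 1 / \<beta>) / 2)\<bar> = (\<beta> ^ k + 1 / \<beta> ^ k) / 2"
    using abs_poly_cheb_T_eq[of \<beta> "1 / \<beta>" "(\<beta> + 1 / \<beta>) / 2" k] assms
    by (simp add: power_one_over)
  also have "\<dots> = (1 + \<beta> ^ (2 * k)) / (2 * \<beta> ^ k)"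
  proof -
    have "\<beta> ^ (2 * k) = \<beta> ^ k * \<beta> ^ k"
      by (simp add: mult_2 power_add)
    then show ?thesis
      using assms by (simp add: field_simps)
  qed
  finally show ?thesis
    by simp
qed

lemma joukowski_beta:
  fixes \<rho> \<epsilon> :: real
  assumes "0 < \<rho>" "\<rho> < 1" "0 \<le> \<epsilon>"
  defines "s \<equiv> sqrt (1 - (\<rho> + \<epsilon>) / (1 + \<epsilon>))"
  shows "0 < (1 - s) / (1 + s)"
    and "((1 - s) / (1 + s) + 1 / ((1 - s) / (1 + s))) / 2 = (2 + \<epsilon> - \<rho>) / (\<rho> + \<epsilon>)"
proof -
  have "1 - (\<rho> + \<epsilon>) / (1 + \<epsilon>) = (1 - \<rho>) / (1 + \<epsilon>)"
    using assms by (simp add: field_simps)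
  then have s2: "s\<^sup>2 = (1 - \<rho>) / (1 + \<epsilon>)" and s: "0 \<le> s" "s < 1"
    using assms unfolding s_def by simp_all
  then show "0 < (1 - s) / (1 + s)"
    by simp
  have "s\<^sup>2 < 1"
    using s by (simp add: abs_square_less_1)
  then have "((1 - s) / (1 + s) + 1 / ((1 - s) / (1 + s))) / 2 = (1 + s\<^sup>2) / (1 - s\<^sup>2)"
    using s by (simp add: field_simps power2_eq_square)
  also have "\<dots> = (2 + \<epsilon> - \<rho>) / (\<rho> + \<epsilon>)"
  proof -
    have "1 + s\<^sup>2 = (2 + \<epsilon> - \<rho>) / (1 + \<epsilon>)" "1 - s\<^sup>2 = (\<rho> + \<epsilon>) / (1 + \<epsilon>)"
      using assms unfolding s2 by (simp_all add: field_simps)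
    then show ?thesis
      using assms by simp
  qed
  finally show "((1 - s) / (1 + s) + 1 / ((1 - s) / (1 + s))) / 2 = (2 + \<epsilon> - \<rho>) / (\<rho> + \<epsilon>)" .
qed

lemma abs_poly_cheb_T_image_minus_one:
  fixes \<rho> \<epsilon> :: real
  assumes "0 < \<rho>" "0 \<le> \<epsilon>" "\<epsilon> \<le> 1"
  defines "R \<equiv> sqrt ((1 + \<rho>) * (1 - \<epsilon>))"
  shows "\<bar>poly (cheb_T k) (- (2 + \<rho> - \<epsilon>) / (\<rho> + \<epsilon>))\<bar>
    = (1 / (\<rho> + \<epsilon>)) ^ k * ((2 + \<rho> - \<epsilon> - 2 * R) ^ k + (2 + \<rho> - \<epsilon> + 2 * R) ^ k) / 2"
proof -
  define A B where "A = 2 + \<rho> - \<epsilon> - 2 * R" and "B = 2 + \<rho> - \<epsilon> + 2 * R"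
  have R: "R\<^sup>2 = (1 + \<rho>) * (1 - \<epsilon>)" "0 \<le> R"
    using assms unfolding R_def by simp_all
  have "A * B = (2 + \<rho> - \<epsilon>)\<^sup>2 - 4 * R\<^sup>2"
    unfolding A_def B_def by (simp add: algebra_simps power2_eq_square)
  also have "\<dots> = (\<rho> + \<epsilon>)\<^sup>2"
    unfolding R(1) by (simp add: algebra_simps power2_eq_square)
  finally have AB: "A * B = (\<rho> + \<epsilon>)\<^sup>2" .
  have "0 < B"
    using assms(1,3) R(2) unfolding B_def by simp
  then have "0 < A"
    using AB assms(1,2) by (metis add_pos_nonneg zero_less_mult_pos2 zero_less_power2 less_irrefl)
  have "\<rho> + \<epsilon> \<noteq> 0"
    using assms(1,2) by simp
  have "\<bar>poly (cheb_T k) (- (2 + \<rho> - \<epsilon>) / (\<rho> + \<epsilon>))\<bar>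
      = (\<bar>- A / (\<rho> + \<epsilon>)\<bar> ^ k + \<bar>- B / (\<rho> + \<epsilon>)\<bar> ^ k) / 2"
  proof (rule abs_poly_cheb_T_eq)
    show "- A / (\<rho> + \<epsilon>) + - B / (\<rho> + \<epsilon>) = 2 * (- (2 + \<rho> - \<epsilon>) / (\<rho> + \<epsilon>))"
      using \<open>\<rho> + \<epsilon> \<noteq> 0\<close> unfolding A_def B_def by (simp add: divide_simps)
    have "- A / (\<rho> + \<epsilon>) * (- B / (\<rho> + \<epsilon>)) = A * B / (\<rho> + \<epsilon>)\<^sup>2"
      by (simp add: power2_eq_square)
    then show "- A / (\<rho> + \<epsilon>) * (- B / (\<rho> + \<epsilon>)) = 1"
      using AB \<open>\<rho> + \<epsilon> \<noteq> 0\<close> by simp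
  qed
  also have "\<dots> = (1 / (\<rho> + \<epsilon>)) ^ k * (A ^ k + B ^ k) / 2"
    using \<open>0 < A\<close> \<open>0 < B\<close> assms(1,2) by (simp add: power_divide power_one_over field_simps)
  finally show ?thesis
    unfolding A_def B_def .
qed

theorem lemma3:
  fixes \<rho> \<epsilon> :: real and k :: nat
  assumes "0 < \<rho>" "\<rho> < 1" "1 \<le> k"
    and "0 \<le> \<epsilon>"
    and "\<epsilon> \<le> \<rho> * (1 + cos ((2 * real k - 1) / (2 * real k) * pi))
                    / (1 - cos ((2 * real k - 1) / (2 * real k) * pi))"
  shows "let \<beta> = (1 - sqrt (1 - (\<rho> + \<epsilon>) / (1 + \<epsilon>))) / (1 + sqrt (1 - (\<rho> + \<epsilon>) / (1 + \<epsilon>)));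
             \<rho>t = 2 * \<beta> ^ k / (1 + \<beta> ^ (2 * k))
         in poly_l1 (p_eps \<rho> k \<epsilon>) =
            \<rho>t / 2 * (1 / (\<rho> + \<epsilon>)) ^ k *
            ((2 + \<rho> - \<epsilon> - 2 * sqrt ((1 + \<rho>) * (1 - \<epsilon>))) ^ k
             + (2 + \<rho> - \<epsilon> + 2 * sqrt ((1 + \<rho>) * (1 - \<epsilon>))) ^ k)"
proof -
  define \<beta> where "\<beta> = (1 - sqrt (1 - (\<rho> + \<epsilon>) / (1 + \<epsilon>))) / (1 + sqrt (1 - (\<rho> + \<epsilon>) / (1 + \<epsilon>)))"
  note \<beta> = joukowski_beta[OF assms(1,2,4), folded \<beta>_def]
  have "\<epsilon> \<le> \<rho> * (1 + cheb_node k k) / (1 - cheb_node k k)"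
    using assms(5) by (simp only: cheb_node_def)
  note shift = shift_le_if_eps_bound[OF assms(1,4) cheb_node_last_nonpos[OF assms(3)] this]
  have "\<epsilon> \<le> 1"
    using shift(2) assms(2) by simp
  have "poly_l1 (p_eps \<rho> k \<epsilon>)
      = \<bar>poly (cheb_T k) (- (2 + \<rho> - \<epsilon>) / (\<rho> + \<epsilon>))\<bar> * (1 / \<bar>poly (cheb_T k) ((\<beta> + 1 / \<beta>) / 2)\<bar>)"
    unfolding \<beta>(2) using poly_l1_p_eps[OF _ _ shift(1)] assms by simp
  also have "\<dots> = (1 / (\<rho> + \<epsilon>)) ^ k
      * ((2 + \<rho> - \<epsilon> - 2 * sqrt ((1 + \<rho>) * (1 - \<epsilon>))) ^ k
         + (2 + \<rho> - \<epsilon> + 2 * sqrt ((1 + \<rho>) * (1 - \<epsilon>))) ^ k) / 2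
      * (2 * \<beta> ^ k / (1 + \<beta> ^ (2 * k)))"
    by (simp only: abs_poly_cheb_T_image_minus_one[OF assms(1,4) \<open>\<epsilon> \<le> 1\<close>]
        inverse_abs_poly_cheb_T_joukowski[OF \<beta>(1)])
  finally show ?thesis
    unfolding Let_def \<beta>_def[symmetric] using \<beta>(1) by (simp add: field_simps)
qed

end
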